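(* Let $(X,\mathtt{d})$ be an instance of metric $k$-center clustering with $z$ outliers, $|X|=n$, let $\epsilon>0$ and $\eta\in(0,1/2)$. If Algorithm 3 (described in the context) is run with $t=\frac{ck}{1-\eta}$ where $c=2+\frac{2}{k(1-\eta)}\ln\frac{1}{\eta}$, then with probability at least $1-2\eta$ its output $E$ satisfies $\phi_{\epsilon}(X,E)\leq 2r_{\mathtt{opt}}$.
   Context: Let $(X,\mathtt{d})$ be a finite metric space with $|X|=n$ and let $k,z$ be positive integers with $z<n$. The $k$-center clustering with $z$ outliers problem asks for $X'\subseteq X$ with $|X'|\geq n-z$ and centers $c_1,\dots,c_k\in X$ minimizing $\max_{p\in X'}\min_j\mathtt{d}(p,c_j)$; $r_{\mathtt{opt}}$ is the optimal value. For $\epsilon\geq0$ and $A\subseteq X$ of any size, $\phi_\epsilon(X,A)=\min\{\max_{p\in X'}\min_{c\in A}\mathtt{d}(p,c)\;:\;X'\subseteq X,\ |X'|\geq n-(1+\epsilon)z\}$; $\mathtt{d}(p,E)=\min_{q\in E}\mathtt{d}(p,q)$. Algorithm 3 (input $(X,\mathtt{d})$, $k,z$, parameters $\epsilon>0$, $\eta\in(0,1/2)$, $t\in\mathbb{Z}^+$): Let $\gamma=z/n$, $\sigma=\frac{2}{1+\sqrt{1+\frac{4(1+\epsilon)}{3\epsilon}}}$, $n'=\frac{3}{\sigma^2(1+\epsilon)\gamma}\log\frac{4}{\eta}$, and $E=\emptyset$. Set $j=1$ and add to $E$ $\frac{1}{1-\gamma}\log\frac1\eta$ vertices selected uniformly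 at random from $X$. While $j<t$: set $j=j+1$; sample $n'$ vertices uniformly at random from $X$, forming $A_j$; let $\hat r_j$ be the $(1+\sigma)(1+\epsilon)\gamma n'$-th largest value among $\{\mathtt{d}(p,E):p\in A_j\}$, and let $\hat A_j=\{p\in A_j:\mathtt{d}(p,E)\geq\hat r_j\}$; add $\hat A_j$ to $E$. Output $E$. *)

theory Defs
  imports "HOL-Probability.Probability"
begin

definition metric_on :: "'a set \<Rightarrow> ('a \<Rightarrow> 'a \<Rightarrow> real) \<Rightarrow> bool" where
  "metric_on X d \<longleftrightarrow>
     (\<forall>x\<in>X. \<forall>y\<in>X. 0 \<le> d x y) \<and>
     (\<forall>x\<in>X. \<forall>y\<in>X. d x y = 0 \<longleftrightarrow> x = y) \<and>
     (\<forall>x\<in>X. \<forall>y\<in>X. d x y = d y x) \<and>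
     (\<forall>x\<in>X. \<forall>y\<in>X. \<forall>w\<in>X. d x w \<le> d x y + d y w)"

definition dist_set :: "('a \<Rightarrow> 'a \<Rightarrow> real) \<Rightarrow> 'a \<Rightarrow> 'a set \<Rightarrow> real" where
  "dist_set d p E = Min ((\<lambda>q. d p q) ` E)"

text \<open>Radius of a set of points Y w.r.t. centres A: max over p in Y of d(p,A);
  the max over the empty set is taken to be 0.\<close>
definition radius :: "('a \<Rightarrow> 'a \<Rightarrow> real) \<Rightarrow> 'a set \<Rightarrow> 'a set \<Rightarrow> real" where
  "radius d Y A = Max (insert 0 ((\<lambda>p. dist_set d p A) ` Y))"

text \<open>Optimal radius of k-center clustering with z outliers (centres c_1..c_k in X,
  possibly repeated, i.e. a nonempty set of at most k centres).\<close>
definition r_opt :: "'a set \<Rightarrow> ('a \<Rightarrow> 'a \<Rightarrow> real) \<Rightarrow> nat \<Rightarrow> nat \<Rightarrow> real" where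
  "r_opt X d k z = Min {radius d X' C | X' C. X' \<subseteq> X \<and> card X' \<ge> card X - z
                                        \<and> C \<subseteq> X \<and> C \<noteq> {} \<and> card C \<le> k}"

definition phi :: "real \<Rightarrow> 'a set \<Rightarrow> ('a \<Rightarrow> 'a \<Rightarrow> real) \<Rightarrow> nat \<Rightarrow> 'a set \<Rightarrow> real" where
  "phi eps X d z A = Min {radius d X' A | X'. X' \<subseteq> X \<and> real (card X') \<ge> real (card X) - (1 + eps) * real z}"

fun sample_list :: "nat \<Rightarrow> 'a set \<Rightarrow> 'a list pmf" where
  "sample_list 0 X = return_pmf []"
| "sample_list (Suc m) X =
     bind_pmf (pmf_of_set X) (\<lambda>x. bind_pmf (sample_list m X) (\<lambda>xs. return_pmf (x # xs)))"

fun iter_pmf :: "nat \<Rightarrow> ('b \<Rightarrow> 'b pmf) \<Rightarrow> 'b \<Rightarrow> 'b pmf" where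
  "iter_pmf 0 f x = return_pmf x"
| "iter_pmf (Suc n) f x = bind_pmf (f x) (iter_pmf n f)"

text \<open>m-th largest value of a list (with multiplicity); if m exceeds the length,
  the smallest value is used (so that all sampled points are selected).\<close>
definition mth_largest :: "nat \<Rightarrow> real list \<Rightarrow> real" where
  "mth_largest m xs = rev (sort xs) ! (min m (length xs) - 1)"

definition alg3_sigma :: "real \<Rightarrow> real" where
  "alg3_sigma eps = 2 / (1 + sqrt (1 + 4 * (1 + eps) / (3 * eps)))"

definition alg3_gamma :: "'a set \<Rightarrow> nat \<Rightarrow> real" where
  "alg3_gamma X z = real z / real (card X)"

definition alg3_nprime :: "'a set \<Rightarrow> nat \<Rightarrow> real \<Rightarrow> real \<Rightarrow> nat" where
  "alg3_nprime X z eps eta =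
     nat \<lceil>3 / ((alg3_sigma eps)\<^sup>2 * (1 + eps) * alg3_gamma X z) * ln (4 / eta)\<rceil>"

definition alg3_rank :: "'a set \<Rightarrow> nat \<Rightarrow> real \<Rightarrow> real \<Rightarrow> nat" where
  "alg3_rank X z eps eta =
     nat \<lceil>(1 + alg3_sigma eps) * (1 + eps) * alg3_gamma X z * real (alg3_nprime X z eps eta)\<rceil>"

definition alg3_ninit :: "'a set \<Rightarrow> nat \<Rightarrow> real \<Rightarrow> nat" where
  "alg3_ninit X z eta = nat \<lceil>1 / (1 - alg3_gamma X z) * ln (1 / eta)\<rceil>"

definition alg3_step :: "'a set \<Rightarrow> ('a \<Rightarrow> 'a \<Rightarrow> real) \<Rightarrow> nat \<Rightarrow> real \<Rightarrow> real \<Rightarrow> 'a set \<Rightarrow> 'a set pmf" where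
  "alg3_step X d z eps eta E =
     bind_pmf (sample_list (alg3_nprime X z eps eta) X) (\<lambda>A.
       (let r = mth_largest (alg3_rank X z eps eta) (map (\<lambda>p. dist_set d p E) A)
        in return_pmf (E \<union> {p \<in> set A. dist_set d p E \<ge> r})))"

definition alg3 :: "'a set \<Rightarrow> ('a \<Rightarrow> 'a \<Rightarrow> real) \<Rightarrow> nat \<Rightarrow> nat \<Rightarrow> real \<Rightarrow> real \<Rightarrow> nat \<Rightarrow> 'a set pmf" where
  "alg3 X d k z eps eta t =
     bind_pmf (sample_list (alg3_ninit X z eta) X) (\<lambda>E0.
       iter_pmf (t - 1) (alg3_step X d z eps eta) (set E0))"

end

theory Submission
  imports Defs
begin

text \<open>Fix an optimal solution with inliers \<open>Xs\<close>, centres \<open>Cs\<close> and radius \<open>rad\<close>, and call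
  a centre covered by \<open>E\<close> if some point of \<open>E\<close> lies within \<open>rad\<close> of it. Once all centres are
  covered, every inlier is within \<open>2 rad\<close> of \<open>E\<close>, so \<open>phi eps X d z E \<le> 2 rad\<close>. Otherwise
  more than \<open>eps z\<close> inliers are farther than \<open>2 rad\<close> from \<open>E\<close>; with probability at least
  \<open>1 - eta/2\<close> the next sample contains such a far inlier but fewer outliers than the selection
  rank (a Chernoff bound, balanced by the choice of \<open>sigma\<close>), so a far inlier is selected, and it
  covers a new centre. Hence the potential \<open>(1/eta) ^ (k - #covered)\<close> shrinks in expectation by
  the factor \<open>eta/2 + (1 - eta/2) eta\<close> per round, and after \<open>t - 1\<close> rounds the failure
  probability is at most \<open>(1/eta) ^ k (eta/2 + (1 - eta/2) eta) ^ (t - 1) \<le> 2 eta\<close>.\<close>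

section \<open>Uniform sampling with replacement\<close>

lemma sample_list_Suc_eq_map_pmf:
  "sample_list (Suc m) X = bind_pmf (pmf_of_set X) (\<lambda>x. map_pmf ((#) x) (sample_list m X))"
  by (simp add: map_pmf_def)

lemma set_pmf_sample_listD:
  assumes "finite X" "X \<noteq> {}" "xs \<in> set_pmf (sample_list m X)"
  shows "length xs = m" "set xs \<subseteq> X"
proof -
  have "length xs = m \<and> set xs \<subseteq> X" using assms(3)
  proof (induction m arbitrary: xs)
    case (Suc m)
    then obtain x ys where "x \<in> X" "ys \<in> set_pmf (sample_list m X)" "xs = x # ys"
      using assms(1,2) by (auto simp: sample_list_Suc_eq_map_pmf set_pmf_of_set)
    with Suc.IH show ?case by auto
  qed simp
  then show "length xs = m" "set xs \<subseteq> X" by auto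
qed

lemma finite_set_pmf_sample_list:
  assumes "finite X" "X \<noteq> {}"
  shows "finite (set_pmf (sample_list m X))"
proof (rule finite_subset)
  show "set_pmf (sample_list m X) \<subseteq> {xs. set xs \<subseteq> X \<and> length xs = m}"
    using set_pmf_sample_listD[OF assms] by blast
  show "finite {xs. set xs \<subseteq> X \<and> length xs = m}"
    using finite_lists_length_eq[OF assms(1)] by simp
qed

lemma expectation_sample_list_prod_list:
  fixes f :: "'a \<Rightarrow> real"
  assumes "finite X" "X \<noteq> {}"
  shows "measure_pmf.expectation (sample_list m X) (\<lambda>xs. prod_list (map f xs))
           = (sum f X / card X) ^ m"
proof (induction m)
  case (Suc m)
  have "measure_pmf.expectation (sample_list (Suc m) X) (\<lambda>xs. prod_list (map f xs))
     = (\<Sum>a\<in>X. measure_pmf.expectation (map_pmf ((#) a) (sample_list m X))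
                  (\<lambda>xs. prod_list (map f xs)) /\<^sub>R real (card X))"
    unfolding sample_list_Suc_eq_map_pmf
    by (rule pmf_expectation_bind_pmf_of_set)
       (use assms finite_set_pmf_sample_list[OF assms] in auto)
  also have "\<dots> = (\<Sum>a\<in>X. f a * (sum f X / card X) ^ m / real (card X))"
    by (simp add: Suc.IH field_simps)
  also have "\<dots> = (sum f X / card X) ^ Suc m"
    by (simp add: sum_divide_distrib[symmetric] sum_distrib_right[symmetric] field_simps)
  finally show ?case .
qed simp

lemma prob_sample_list_avoids:
  assumes "finite X" "X \<noteq> {}"
  shows "measure_pmf.prob (sample_list m X) {xs. \<forall>x\<in>set xs. x \<notin> S}
           = (real (card (X - S)) / card X) ^ m"
proof -
  have "measure_pmf.prob (sample_list m X) {xs. \<forall>x\<in>set xs. x \<notin> S}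
      = measure_pmf.expectation (sample_list m X) (indicator {xs. \<forall>x\<in>set xs. x \<notin> S})"
    by simp
  also have "\<dots> = measure_pmf.expectation (sample_list m X) (\<lambda>xs. prod_list (map (indicator (X - S)) xs))"
  proof (intro integral_cong_AE)
    have "prod_list (map (indicator (X - S)) xs) = (of_bool (set xs \<subseteq> X - S) :: real)" for xs
      by (induction xs) (auto simp: indicator_def)
    then show "AE xs in measure_pmf (sample_list m X).
        indicator {xs. \<forall>x\<in>set xs. x \<notin> S} xs = prod_list (map (indicator (X - S)) xs :: real list)"
      using set_pmf_sample_listD(2)[OF assms] by (auto simp: AE_measure_pmf_iff indicator_def)
  qed auto
  also have "\<dots> = (sum (indicator (X - S)) X / card X) ^ m"
    by (rule expectation_sample_list_prod_list[OF assms])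
  also have "sum (indicator (X - S)) X = real (card (X - S))"
    using Indicator_Function.sum_mult_indicator[OF assms(1), where f = "\<lambda>_. 1 :: real" and B = "X - S"]
    by (simp add: Int_absorb1)
  finally show ?thesis .
qed

definition count_in :: "'a set \<Rightarrow> 'a list \<Rightarrow> nat" where
  "count_in Q xs = length (filter (\<lambda>x. x \<in> Q) xs)"

text \<open>Markov's inequality applied to \<open>b ^ count_in Q xs\<close>.\<close>

lemma prob_sample_list_count_in_ge:
  assumes "finite X" "X \<noteq> {}" "(b::real) \<ge> 1"
  shows "measure_pmf.prob (sample_list m X) {xs. a \<le> count_in Q xs}
           \<le> (1 + (b - 1) * real (card (X \<inter> Q)) / card X) ^ m / b ^ a"
proof -
  let ?f = "\<lambda>x. if x \<in> Q then b else 1"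
  have "measure_pmf.prob (sample_list m X) {xs. a \<le> count_in Q xs}
     \<le> measure_pmf.prob (sample_list m X)
         {xs \<in> space (measure_pmf (sample_list m X)). b ^ a \<le> b ^ count_in Q xs}"
    using assms(3) by (intro measure_pmf.finite_measure_mono) (auto intro: power_increasing)
  also have "\<dots> \<le> measure_pmf.expectation (sample_list m X) (\<lambda>xs. b ^ count_in Q xs) / b ^ a"
    using assms(3)
    by (intro integral_Markov_inequality_measure[where A=UNIV] integrable_measure_pmf_finite
          finite_set_pmf_sample_list assms) auto
  also have "measure_pmf.expectation (sample_list m X) (\<lambda>xs. b ^ count_in Q xs)
           = (sum ?f X / card X) ^ m"
  proof -
    have "prod_list (map ?f xs) = b ^ count_in Q xs" for xs
      by (induction xs) (auto simp: count_in_def)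
    then show ?thesis
      using expectation_sample_list_prod_list[OF assms(1,2), where f = ?f and m = m] by simp
  qed
  also have "sum ?f X = real (card X) + (b - 1) * real (card (X \<inter> Q))"
  proof -
    have "sum ?f X = (\<Sum>x\<in>X. 1 + (b - 1) * indicator Q x)"
      by (intro sum.cong) (auto simp: indicator_def)
    also have "\<dots> = real (card X) + (b - 1) * (\<Sum>x\<in>X. indicator Q x)"
      by (simp add: sum.distrib sum_distrib_left)
    also have "(\<Sum>x\<in>X. indicator Q x) = real (card (X \<inter> Q))"
      using Indicator_Function.sum_mult_indicator[OF assms(1), where f = "\<lambda>_. 1 :: real" and B = Q]
      by simp
    finally show ?thesis .
  qed
  also have "(real (card X) + (b - 1) * real (card (X \<inter> Q))) / card X
           = 1 + (b - 1) * real (card (X \<inter> Q)) / card X"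
    using assms(1,2) by (simp add: field_simps)
  finally show ?thesis .
qed

lemma ln_one_plus_ge:
  fixes x :: real
  assumes "0 \<le> x"
  shows "2 * x / (2 + x) \<le> ln (1 + x)"
proof -
  let ?f = "\<lambda>t::real. ln (1 + t) - 2 * t / (2 + t)"
  have "?f 0 \<le> ?f x"
  proof (rule DERIV_nonneg_imp_nondecreasing[OF assms])
    fix t :: real
    assume "0 \<le> t" "t \<le> x"
    then have "(?f has_real_derivative (1 / (1 + t) - (2 * (2 + t) - 2 * t * 1) / (2 + t)\<^sup>2)) (at t)"
      by (auto intro!: derivative_eq_intros simp: power2_eq_square)
    moreover have "1 / (1 + t) - (2 * (2 + t) - 2 * t * 1) / (2 + t)\<^sup>2 = t\<^sup>2 / ((1 + t) * (2 + t)\<^sup>2)"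
    proof -
      have "1 / (1 + t) - (2 * (2 + t) - 2 * t * 1) / (2 + t)\<^sup>2
          = ((2 + t)\<^sup>2 - (2 * (2 + t) - 2 * t * 1) * (1 + t)) / ((1 + t) * (2 + t)\<^sup>2)"
        using \<open>0 \<le> t\<close> by (simp add: diff_frac_eq)
      also have "(2 + t)\<^sup>2 - (2 * (2 + t) - 2 * t * 1) * (1 + t) = t\<^sup>2"
        by (simp add: power2_eq_square algebra_simps)
      finally show ?thesis .
    qed
    moreover have "0 \<le> t\<^sup>2 / ((1 + t) * (2 + t)\<^sup>2)"
      using \<open>0 \<le> t\<close> by simp
    ultimately show "\<exists>y. (?f has_real_derivative y) (at t) \<and> 0 \<le> y" by metis
  qed
  then show ?thesis by simp
qed

lemma chernoff_exponent_ge: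
  fixes s :: real
  assumes "0 \<le> s" "s \<le> 1"
  shows "s + s\<^sup>2 / 3 \<le> (1 + s) * ln (1 + s)"
proof -
  have "(1 + s) * (2 * s / (2 + s)) - (s + s\<^sup>2 / 3) = s\<^sup>2 * (1 - s) / (3 * (2 + s))"
    using assms by (simp add: field_simps power2_eq_square)
  then have "s + s\<^sup>2 / 3 = (1 + s) * (2 * s / (2 + s)) - s\<^sup>2 * (1 - s) / (3 * (2 + s))"
    by simp
  also have "\<dots> \<le> (1 + s) * (2 * s / (2 + s))"
    using assms by simp
  also have "\<dots> \<le> (1 + s) * ln (1 + s)"
    using ln_one_plus_ge[OF assms(1)] assms by (intro mult_left_mono) auto
  finally show ?thesis .
qed

lemma measure_bind_pmf_eq_expectation:
  "measure_pmf.prob (bind_pmf M f) A = measure_pmf.expectation M (\<lambda>x. measure_pmf.prob (f x) A)"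
proof -
  have "ennreal (measure_pmf.prob (bind_pmf M f) A) = emeasure (bind_pmf M f) A"
    by (simp add: measure_pmf.emeasure_eq_measure)
  also have "\<dots> = (\<integral>\<^sup>+x. emeasure (f x) A \<partial>M)"
    by simp
  also have "\<dots> = (\<integral>\<^sup>+x. ennreal (measure_pmf.prob (f x) A) \<partial>M)"
    by (simp add: measure_pmf.emeasure_eq_measure)
  also have "\<dots> = ennreal (measure_pmf.expectation M (\<lambda>x. measure_pmf.prob (f x) A))"
    by (intro nn_integral_eq_integral measure_pmf.integrable_const_bound[where B=1]) auto
  finally show ?thesis by (simp add: integral_nonneg_AE)
qed

section \<open>Feasible solutions and covered centres\<close>

lemma dist_set_le: "finite E \<Longrightarrow> q \<in> E \<Longrightarrow> dist_set d p E \<le> d p q"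
  unfolding dist_set_def by (rule Min_le) auto

lemma dist_set_attained:
  assumes "finite E" "E \<noteq> {}"
  shows "\<exists>q\<in>E. dist_set d p E = d p q"
proof -
  have "Min ((\<lambda>q. d p q) ` E) \<in> (\<lambda>q. d p q) ` E"
    using assms by (intro Min_in) auto
  then show ?thesis
    unfolding dist_set_def by auto
qed

lemma dist_set_antimono:
  "finite E' \<Longrightarrow> E \<subseteq> E' \<Longrightarrow> E \<noteq> {} \<Longrightarrow> dist_set d p E' \<le> dist_set d p E"
  unfolding dist_set_def by (rule Min_antimono) auto

lemma radius_le_iff:
  "finite Y \<Longrightarrow> radius d Y A \<le> R \<longleftrightarrow> 0 \<le> R \<and> (\<forall>p\<in>Y. dist_set d p A \<le> R)"
  unfolding radius_def by (subst Max.bounded_iff) auto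

lemma dist_set_le_radius: "finite Y \<Longrightarrow> p \<in> Y \<Longrightarrow> dist_set d p A \<le> radius d Y A"
  unfolding radius_def by (rule Max_ge) auto

lemma radius_nonneg: "finite Y \<Longrightarrow> 0 \<le> radius d Y A"
  unfolding radius_def by (rule Max_ge) auto

lemma radius_antimono:
  assumes "finite Y" "finite E'" "E \<subseteq> E'" "E \<noteq> {}"
  shows "radius d Y E' \<le> radius d Y E"
  unfolding radius_le_iff[OF assms(1)]
  using radius_nonneg[OF assms(1)] dist_set_le_radius[OF assms(1)] dist_set_antimono[OF assms(2-4)]
  by (meson order_trans)

lemma finite_phi_candidates:
  "finite X \<Longrightarrow> finite {radius d X' A | X'. X' \<subseteq> X \<and> P X'}"
  by (rule finite_subset[of _ "(\<lambda>X'. radius d X' A) ` Pow X"]) auto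

lemma phi_le_radius:
  assumes "finite X" "Y \<subseteq> X" "real (card X) - (1 + eps) * real z \<le> real (card Y)"
  shows "phi eps X d z A \<le> radius d Y A"
  unfolding phi_def by (rule Min_le) (use assms finite_phi_candidates in auto)

lemma phi_attained:
  assumes "finite X" "0 \<le> eps"
  obtains Y where "Y \<subseteq> X" "real (card X) - (1 + eps) * real z \<le> real (card Y)"
    "phi eps X d z A = radius d Y A"
proof -
  have "radius d X A \<in> {radius d X' A | X'. X' \<subseteq> X \<and> real (card X) - (1 + eps) * real z \<le> real (card X')}"
    using assms by auto
  then have "phi eps X d z A
      \<in> {radius d X' A | X'. X' \<subseteq> X \<and> real (card X) - (1 + eps) * real z \<le> real (card X')}"
    unfolding phi_def by (intro Min_in finite_phi_candidates assms(1)) blast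
  then show ?thesis
    using that by blast
qed

lemma phi_antimono:
  assumes "finite X" "0 \<le> eps" "finite E'" "E \<subseteq> E'" "E \<noteq> {}"
  shows "phi eps X d z E' \<le> phi eps X d z E"
proof -
  obtain Y where Y: "Y \<subseteq> X" "real (card X) - (1 + eps) * real z \<le> real (card Y)"
    "phi eps X d z E = radius d Y E"
    using phi_attained[OF assms(1,2)] by blast
  have "phi eps X d z E' \<le> radius d Y E'"
    by (rule phi_le_radius[OF assms(1) Y(1,2)])
  also have "\<dots> \<le> radius d Y E"
    using radius_antimono[OF finite_subset[OF Y(1) assms(1)] assms(3-5)] .
  finally show ?thesis
    using Y(3) by simp
qed

lemma r_opt_attained:
  assumes "finite X" "X \<noteq> {}" "0 < k"
  obtains Xs Cs where "Xs \<subseteq> X" "card X - z \<le> card Xs" "Cs \<subseteq> X" "Cs \<noteq> {}" "card Cs \<le> k"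
    "r_opt X d k z = radius d Xs Cs"
proof -
  let ?S = "{radius d X' C | X' C. X' \<subseteq> X \<and> card X' \<ge> card X - z \<and> C \<subseteq> X \<and> C \<noteq> {} \<and> card C \<le> k}"
  have "finite ?S"
    by (rule finite_subset[of _ "(\<lambda>(X', C). radius d X' C) ` (Pow X \<times> Pow X)"])
       (use assms(1) in auto)
  moreover obtain x where "x \<in> X"
    using assms(2) by blast
  then have "radius d X {x} \<in> ?S"
    using assms(3) by force
  ultimately have "r_opt X d k z \<in> ?S"
    unfolding r_opt_def by (intro Min_in) auto
  then show ?thesis
    using that by blast
qed

locale kcenter_solution =
  fixes X :: "'a set" and d :: "'a \<Rightarrow> 'a \<Rightarrow> real" and k z :: nat and Xs Cs :: "'a set"
  assumes finite_X: "finite X" and metric: "metric_on X d"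
    and inliers_subset: "Xs \<subseteq> X" and card_inliers: "card X - z \<le> card Xs"
    and centres_subset: "Cs \<subseteq> X" and centres_nonempty: "Cs \<noteq> {}" and card_centres: "card Cs \<le> k"
begin

abbreviation rad :: real where
  "rad \<equiv> radius d Xs Cs"

lemma finite_inliers: "finite Xs"
  using finite_subset[OF inliers_subset finite_X] .

lemma finite_centres: "finite Cs"
  using finite_subset[OF centres_subset finite_X] .

lemma rad_nonneg: "0 \<le> rad"
  using radius_nonneg[OF finite_inliers] .

lemma card_inliers_ge: "real (card X) - real z \<le> real (card Xs)"
  using card_inliers by linarith

lemma nearest_centre:
  assumes "p \<in> Xs"
  obtains c where "c \<in> Cs" "d p c \<le> rad"
  using dist_set_attained[OF finite_centres centres_nonempty, of d p]
    dist_set_le_radius[OF finite_inliers assms, of d Cs] that by force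

definition covered :: "'a set \<Rightarrow> 'a set" where
  "covered E = {c \<in> Cs. \<exists>q\<in>E. d q c \<le> rad}"

definition far_inliers :: "'a set \<Rightarrow> 'a set" where
  "far_inliers E = {p \<in> Xs. 2 * rad < dist_set d p E}"

lemma card_covered_le: "card (covered E) \<le> k"
  using card_mono[OF finite_centres, of "covered E"] card_centres unfolding covered_def by auto

lemma dist_set_le_via_centre:
  assumes "finite E" "E \<subseteq> X" "p \<in> Xs" "c \<in> Cs" "d p c \<le> rad" "q \<in> E" "d q c \<le> rad"
  shows "dist_set d p E \<le> 2 * rad"
proof -
  have "p \<in> X" "c \<in> X" "q \<in> X"
    using assms inliers_subset centres_subset by auto
  then have "d p q \<le> d p c + d q c"
    using metric unfolding metric_on_def by metis
  then show ?thesis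
    using dist_set_le[OF assms(1,6), of d p] assms(5,7) by linarith
qed

lemma phi_le_if_all_covered:
  assumes "finite E" "E \<subseteq> X" "0 \<le> eps" "covered E = Cs"
  shows "phi eps X d z E \<le> 2 * rad"
proof -
  have "real (card X) - (1 + eps) * real z \<le> real (card Xs)"
    using card_inliers_ge mult_nonneg_nonneg[OF assms(3), of "real z"] by (simp add: algebra_simps)
  then have "phi eps X d z E \<le> radius d Xs E"
    by (rule phi_le_radius[OF finite_X inliers_subset])
  also have "radius d Xs E \<le> 2 * rad"
  proof (subst radius_le_iff[OF finite_inliers], intro conjI ballI)
    fix p
    assume p: "p \<in> Xs"
    obtain c where c: "c \<in> Cs" "d p c \<le> rad"
      using nearest_centre[OF p] .
    then obtain q where "q \<in> E" "d q c \<le> rad"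
      using assms(4) unfolding covered_def by blast
    then show "dist_set d p E \<le> 2 * rad"
      using dist_set_le_via_centre[OF assms(1,2) p c] by blast
  qed (use rad_nonneg in simp)
  finally show ?thesis .
qed

text \<open>If fewer than \<open>eps z\<close> inliers were far from \<open>E\<close>, discarding the far points
  together with the at most \<open>z\<close> outliers would witness \<open>phi eps X d z E \<le> 2 rad\<close>.\<close>

lemma card_far_inliers_gt:
  assumes "2 * rad < phi eps X d z E"
  shows "eps * z < real (card (far_inliers E))"
proof -
  define W where "W = {p \<in> X. dist_set d p E \<le> 2 * rad}"
  have W: "W \<subseteq> X" "finite W"
    using finite_X unfolding W_def by auto
  have "radius d W E \<le> 2 * rad"
    using rad_nonneg by (subst radius_le_iff[OF W(2)]) (auto simp: W_def)
  then have "\<not> real (card X) - (1 + eps) * real z \<le> real (card W)"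
    using phi_le_radius[OF finite_X W(1), of eps z d E] assms by linarith
  moreover have "far_inliers E = Xs - W"
    using inliers_subset unfolding far_inliers_def W_def by auto
  moreover have "card Xs \<le> card ((Xs - W) \<union> W)"
    by (rule card_mono) (use W(2) finite_inliers in auto)
  then have "card Xs \<le> card (Xs - W) + card W"
    using card_Un_le[of "Xs - W" W] by linarith
  ultimately show ?thesis
    using card_inliers_ge by (simp add: algebra_simps)
qed

lemma card_covered_less:
  assumes "E \<subseteq> E'" "E' \<subseteq> X" "finite E'" "p \<in> E'" "p \<in> far_inliers E"
  shows "card (covered E) < card (covered E')"
proof -
  have p: "p \<in> Xs" "2 * rad < dist_set d p E"
    using assms(5) unfolding far_inliers_def by auto
  obtain c where c: "c \<in> Cs" "d p c \<le> rad"
    using nearest_centre[OF p(1)] .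
  have "c \<notin> covered E"
    using dist_set_le_via_centre[OF finite_subset[OF assms(1,3)] _ p(1) c] assms(1,2) p(2)
    unfolding covered_def by force
  moreover have "c \<in> covered E'"
    using c assms(4) unfolding covered_def by blast
  ultimately have "covered E \<subset> covered E'"
    using assms(1) unfolding covered_def by blast
  moreover have "finite (covered E')"
    using finite_centres unfolding covered_def by simp
  ultimately show ?thesis
    using psubset_card_mono by blast
qed

end

section \<open>One round of Algorithm 3\<close>

lemma length_filter_mono_on:
  "(\<And>x. x \<in> set xs \<Longrightarrow> P x \<Longrightarrow> Q x) \<Longrightarrow> length (filter P xs) \<le> length (filter Q xs)"
  by (induction xs) auto

lemma length_filter_ge_mth_largest:
  fixes v :: "'a \<Rightarrow> real"
  assumes "xs \<noteq> []" "1 \<le> m"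
  shows "min m (length xs) \<le> length (filter (\<lambda>x. mth_largest m (map v xs) \<le> v x) xs)"
proof -
  define ws where "ws = sort (map v xs)"
  define j where "j = min m (length xs)"
  define r where "r = ws ! (length ws - j)"
  have j: "1 \<le> j" "j \<le> length ws"
    using assms unfolding ws_def j_def by (auto simp: Suc_le_eq)
  have "rev ws ! (j - 1) = ws ! (length ws - Suc (j - 1))"
    by (rule rev_nth) (use j in simp)
  then have r: "mth_largest m (map v xs) = r"
    using j unfolding mth_largest_def r_def by (simp add: ws_def j_def)
  have "j = card {length ws - j..<length ws}"
    using j by simp
  also have "\<dots> \<le> card {i. i < length ws \<and> r \<le> ws ! i}"
    by (rule card_mono) (auto simp: r_def ws_def intro!: sorted_nth_mono)
  also have "\<dots> = length (filter (\<lambda>y. r \<le> y) ws)"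
    by (simp add: length_filter_conv_card)
  also have "\<dots> = length (filter (\<lambda>y. r \<le> y) (map v xs))"
    unfolding ws_def by (metis mset_filter mset_sort size_mset)
  also have "\<dots> = length (filter (\<lambda>x. r \<le> v x) xs)"
    by (simp add: filter_map comp_def)
  finally show ?thesis
    unfolding j_def r by simp
qed

lemma exists_selected_by_mth_largest:
  assumes "p \<in> set A" "p \<in> Q" "1 \<le> m" "count_in (- Q) A < m"
  shows "\<exists>x\<in>set A. mth_largest m (map v A) \<le> v x \<and> x \<in> Q \<and> v p \<le> v x"
proof (rule ccontr)
  let ?r = "mth_largest m (map v A)"
  assume none: "\<not> ?thesis"
  then have "v p < ?r"
    using assms(1,2) by force
  have "length (filter (\<lambda>x. ?r \<le> v x) A) \<le> count_in (- Q) A"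
    unfolding count_in_def by (rule length_filter_mono_on) (use none \<open>v p < ?r\<close> in force)
  moreover have "min m (length A) \<le> length (filter (\<lambda>x. ?r \<le> v x) A)"
    using assms(1,3) by (intro length_filter_ge_mth_largest) auto
  moreover have "length (filter (\<lambda>x. ?r \<le> v x) A) < length A"
    using length_filter_less[OF assms(1)] \<open>v p < ?r\<close> by simp
  ultimately show False
    using assms(4) by linarith
qed

text \<open>The defining equation of \<open>sigma\<close> makes the sample size large enough for both tail bounds
  of a round, \<open>prob_sample_misses_far_inliers\<close> and \<open>prob_sample_many_outliers\<close>.\<close>

lemma alg3_sigma_bounds:
  assumes "0 < eps"
  shows "0 < alg3_sigma eps" "alg3_sigma eps < 1"
    "(alg3_sigma eps)\<^sup>2 * (1 + eps) = 3 * eps * (1 - alg3_sigma eps)"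
proof -
  define a where "a = 4 * (1 + eps) / (3 * eps)"
  define s where "s = sqrt (1 + a)"
  have "0 < a"
    using assms unfolding a_def by simp
  then have s: "1 < s" "s\<^sup>2 = 1 + a"
    unfolding s_def by simp_all
  have sigma: "alg3_sigma eps = 2 / (1 + s)"
    unfolding alg3_sigma_def s_def a_def by simp
  show "0 < alg3_sigma eps" "alg3_sigma eps < 1"
    using sigma s by simp_all
  have "(alg3_sigma eps)\<^sup>2 * a = 4 * (s\<^sup>2 - 1) / (1 + s)\<^sup>2"
    using sigma s by (simp add: power_divide)
  also have "s\<^sup>2 - 1 = (s - 1) * (1 + s)"
    by (simp add: power2_eq_square algebra_simps)
  also have "4 * ((s - 1) * (1 + s)) / (1 + s)\<^sup>2 = 4 * (s - 1) / (1 + s)"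
    using s by (simp add: power2_eq_square)
  also have "\<dots> = 4 - 4 * alg3_sigma eps"
    using sigma s by (simp add: field_simps)
  finally show "(alg3_sigma eps)\<^sup>2 * (1 + eps) = 3 * eps * (1 - alg3_sigma eps)"
    using assms unfolding a_def by (simp add: field_simps)
qed

lemma alg3_step_eq_map_pmf:
  "alg3_step X d z eps eta E = map_pmf (\<lambda>A. E \<union> {p \<in> set A.
      mth_largest (alg3_rank X z eps eta) (map (\<lambda>p. dist_set d p E) A) \<le> dist_set d p E})
     (sample_list (alg3_nprime X z eps eta) X)"
  unfolding alg3_step_def map_pmf_def Let_def by simp

locale alg3_run = kcenter_solution +
  fixes eps eta :: real
  assumes eps_pos: "0 < eps" and eta_pos: "0 < eta" and eta_less: "eta < 1/2"
    and z_pos: "0 < z" and z_less: "z < card X"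
begin

abbreviation \<sigma> :: real where "\<sigma> \<equiv> alg3_sigma eps"
abbreviation \<gamma> :: real where "\<gamma> \<equiv> alg3_gamma X z"
abbreviation sample_size :: nat where "sample_size \<equiv> alg3_nprime X z eps eta"
abbreviation select_rank :: nat where "select_rank \<equiv> alg3_rank X z eps eta"
abbreviation step :: "'a set \<Rightarrow> 'a set pmf" where "step \<equiv> alg3_step X d z eps eta"

lemma X_nonempty: "X \<noteq> {}"
  using z_less by auto

lemma gamma_pos: "0 < \<gamma>"
  using z_pos z_less unfolding alg3_gamma_def by simp

lemma gamma_less_one: "\<gamma> < 1"
  using z_less unfolding alg3_gamma_def by simp

lemma sample_size_ge: "3 * ln (4 / eta) \<le> real sample_size * (\<sigma>\<^sup>2 * (1 + eps) * \<gamma>)"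
proof -
  have "0 < \<sigma>\<^sup>2 * (1 + eps) * \<gamma>"
    using alg3_sigma_bounds(1)[OF eps_pos] gamma_pos eps_pos by simp
  moreover have "3 / (\<sigma>\<^sup>2 * (1 + eps) * \<gamma>) * ln (4 / eta) \<le> real sample_size"
    unfolding alg3_nprime_def by (rule real_nat_ceiling_ge)
  ultimately show ?thesis
    by (simp add: field_simps)
qed

lemma ln_four_div_eta_pos: "0 < ln (4 / eta)"
  using eta_pos eta_less by simp

lemma sample_size_pos: "0 < sample_size"
  using sample_size_ge ln_four_div_eta_pos by (cases sample_size) auto

lemma sample_size_ge_eps: "ln (4 / eta) \<le> eps * \<gamma> * real sample_size"
proof -
  have "3 * ln (4 / eta) \<le> real sample_size * (3 * eps * (1 - \<sigma>) * \<gamma>)"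
    using sample_size_ge alg3_sigma_bounds(3)[OF eps_pos] by simp
  then have "ln (4 / eta) \<le> eps * \<gamma> * real sample_size * (1 - \<sigma>)"
    by (simp add: algebra_simps)
  also have "\<dots> \<le> eps * \<gamma> * real sample_size"
    using alg3_sigma_bounds(1)[OF eps_pos] eps_pos gamma_pos by (intro mult_left_le) auto
  finally show ?thesis .
qed

lemma select_rank_ge: "(1 + \<sigma>) * ((1 + eps) * \<gamma> * real sample_size) \<le> real select_rank"
  unfolding alg3_rank_def using real_nat_ceiling_ge by (simp add: mult.assoc)

lemma select_rank_pos: "1 \<le> select_rank"
proof -
  have "0 < (1 + \<sigma>) * ((1 + eps) * \<gamma> * real sample_size)"
    using alg3_sigma_bounds(1)[OF eps_pos] eps_pos gamma_pos sample_size_pos by simp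
  then show ?thesis
    using select_rank_ge by linarith
qed

lemma exp_neg_ln_four_div_eta: "exp (- ln (4 / eta)) = eta / 4"
  using eta_pos by (simp add: exp_minus)

lemma prob_sample_misses_far_inliers:
  assumes "2 * rad < phi eps X d z E"
  shows "measure_pmf.prob (sample_list sample_size X) {A. \<forall>x\<in>set A. x \<notin> far_inliers E} \<le> eta / 4"
proof -
  let ?b = "real (card (X - far_inliers E)) / card X"
  have "far_inliers E \<subseteq> X"
    using inliers_subset unfolding far_inliers_def by auto
  then have "?b = 1 - real (card (far_inliers E)) / card X"
    using finite_X X_nonempty by (simp add: card_Diff_subset finite_subset card_mono of_nat_diff field_simps)
  also have "\<dots> \<le> 1 - eps * \<gamma>"
    using divide_right_mono[OF less_imp_le[OF card_far_inliers_gt[OF assms]], of "real (card X)"]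
    unfolding alg3_gamma_def by simp
  also have "\<dots> \<le> exp (- (eps * \<gamma>))"
    using exp_ge_add_one_self[of "- (eps * \<gamma>)"] by simp
  finally have "?b ^ sample_size \<le> exp (- (eps * \<gamma>)) ^ sample_size"
    by (intro power_mono) auto
  also have "\<dots> = exp (- (eps * \<gamma> * real sample_size))"
    by (simp add: exp_of_nat_mult[symmetric] mult.commute)
  also have "\<dots> \<le> eta / 4"
    using sample_size_ge_eps exp_neg_ln_four_div_eta by (metis exp_le_cancel_iff neg_le_iff_le)
  finally show ?thesis
    using prob_sample_list_avoids[OF finite_X X_nonempty] by simp
qed

lemma outlier_exponent_le:
  "\<sigma> * \<gamma> * real sample_size - real select_rank * ln (1 + \<sigma>) \<le> - ln (4 / eta)"
proof -
  define \<mu> where "\<mu> = (1 + eps) * \<gamma> * real sample_size"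
  have \<sigma>: "0 < \<sigma>" "\<sigma> < 1"
    using alg3_sigma_bounds[OF eps_pos] by auto
  have "(1 + \<sigma>) * \<mu> * ln (1 + \<sigma>) \<le> real select_rank * ln (1 + \<sigma>)"
    using select_rank_ge \<sigma> unfolding \<mu>_def by (intro mult_right_mono) (auto simp: mult.assoc)
  moreover have "(\<sigma> + \<sigma>\<^sup>2 / 3) * \<mu> \<le> (1 + \<sigma>) * ln (1 + \<sigma>) * \<mu>"
    using chernoff_exponent_ge[of \<sigma>] \<sigma> gamma_pos eps_pos unfolding \<mu>_def by (intro mult_right_mono) auto
  moreover have "\<sigma> * \<gamma> * real sample_size \<le> \<sigma> * \<mu>"
    using \<sigma> gamma_pos eps_pos unfolding \<mu>_def by (simp add: mult_right_mono algebra_simps)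
  moreover have "ln (4 / eta) \<le> \<mu> * \<sigma>\<^sup>2 / 3"
    using sample_size_ge unfolding \<mu>_def by (simp add: algebra_simps)
  ultimately show ?thesis
    by (simp add: algebra_simps)
qed

lemma prob_sample_many_outliers:
  "measure_pmf.prob (sample_list sample_size X) {A. select_rank \<le> count_in (- Xs) A} \<le> eta / 4"
proof -
  have \<sigma>: "0 < \<sigma>" "\<sigma> < 1"
    using alg3_sigma_bounds[OF eps_pos] by auto
  have "real (card (X \<inter> - Xs)) \<le> real z"
    using card_Diff_subset[OF finite_inliers inliers_subset] card_inliers by (simp add: Diff_eq[symmetric])
  then have "\<sigma> * real (card (X \<inter> - Xs)) / card X \<le> \<sigma> * \<gamma>"
    using \<sigma> unfolding alg3_gamma_def by (simp add: divide_right_mono)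
  then have base: "1 + (1 + \<sigma> - 1) * real (card (X \<inter> - Xs)) / card X \<le> exp (\<sigma> * \<gamma>)"
    using exp_ge_add_one_self[of "\<sigma> * \<gamma>"] by (simp only: add_diff_cancel_left')
  have "measure_pmf.prob (sample_list sample_size X) {A. select_rank \<le> count_in (- Xs) A}
      \<le> (1 + (1 + \<sigma> - 1) * real (card (X \<inter> - Xs)) / card X) ^ sample_size / (1 + \<sigma>) ^ select_rank"
    by (rule prob_sample_list_count_in_ge[OF finite_X X_nonempty]) (use \<sigma> in simp)
  also have "\<dots> \<le> exp (\<sigma> * \<gamma>) ^ sample_size / (1 + \<sigma>) ^ select_rank"
    by (intro divide_right_mono power_mono base) (use \<sigma> in auto)
  also have "exp (\<sigma> * \<gamma>) ^ sample_size = exp (\<sigma> * \<gamma> * real sample_size)"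
    by (simp add: exp_of_nat_mult[symmetric] mult.commute)
  also have "(1 + \<sigma>) ^ select_rank = exp (real select_rank * ln (1 + \<sigma>))"
    using \<sigma> by (simp add: exp_of_nat_mult)
  also have "exp (\<sigma> * \<gamma> * real sample_size) / exp (real select_rank * ln (1 + \<sigma>))
      = exp (\<sigma> * \<gamma> * real sample_size - real select_rank * ln (1 + \<sigma>))"
    by (simp add: exp_diff)
  also have "\<dots> \<le> eta / 4"
    using outlier_exponent_le exp_neg_ln_four_div_eta by (metis exp_le_cancel_iff)
  finally show ?thesis .
qed

lemma set_pmf_stepD:
  assumes "E' \<in> set_pmf (step E)" "E \<subseteq> X" "finite E"
  shows "E \<subseteq> E'" "E' \<subseteq> X" "finite E'"
  using assms set_pmf_sample_listD(2)[OF finite_X X_nonempty] unfolding alg3_step_eq_map_pmf by auto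

lemma finite_set_pmf_step: "finite (set_pmf (step E))"
  unfolding alg3_step_eq_map_pmf by (simp add: finite_set_pmf_sample_list[OF finite_X X_nonempty])

lemma selection_meets_far_inliers:
  assumes "p \<in> set A" "p \<in> far_inliers E" "count_in (- Xs) A < select_rank"
  shows "{x \<in> set A. mth_largest select_rank (map (\<lambda>x. dist_set d x E) A) \<le> dist_set d x E}
           \<inter> far_inliers E \<noteq> {}"
proof -
  obtain x where "x \<in> set A" "mth_largest select_rank (map (\<lambda>x. dist_set d x E) A) \<le> dist_set d x E"
    "x \<in> Xs" "dist_set d p E \<le> dist_set d x E"
    using exists_selected_by_mth_largest[OF assms(1) _ select_rank_pos] assms(2,3)
    unfolding far_inliers_def by blast
  with assms(2) show ?thesis
    unfolding far_inliers_def by auto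
qed

text \<open>A round fails only if the sample misses all far inliers, or if it contains at least
  \<open>select_rank\<close> outliers.\<close>

lemma prob_step_selects_far_inlier:
  assumes "2 * rad < phi eps X d z E"
  shows "1 - eta / 2 \<le> measure_pmf.prob (step E) {E'. E' \<inter> far_inliers E \<noteq> {}}"
proof -
  let ?M = "sample_list sample_size X"
  let ?h = "\<lambda>A. E \<union> {x \<in> set A. mth_largest select_rank (map (\<lambda>x. dist_set d x E) A) \<le> dist_set d x E}"
  let ?Good = "?h -` {E'. E' \<inter> far_inliers E \<noteq> {}}"
  let ?Miss = "{A. \<forall>x\<in>set A. x \<notin> far_inliers E}"
  let ?Many = "{A. select_rank \<le> count_in (- Xs) A}"
  have "- ?Good \<subseteq> ?Miss \<union> ?Many"
    using selection_meets_far_inliers by fastforce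
  then have "measure_pmf.prob ?M (- ?Good) \<le> measure_pmf.prob ?M (?Miss \<union> ?Many)"
    by (rule measure_pmf.finite_measure_mono) simp
  also have "\<dots> \<le> measure_pmf.prob ?M ?Miss + measure_pmf.prob ?M ?Many"
    by (rule measure_Un_le) auto
  also have "\<dots> \<le> eta / 2"
    using prob_sample_misses_far_inliers[OF assms] prob_sample_many_outliers by linarith
  finally have "1 - eta / 2 \<le> measure_pmf.prob ?M ?Good"
    using measure_pmf.prob_compl[of ?Good ?M] by (simp add: Compl_eq_Diff_UNIV)
  also have "\<dots> = measure_pmf.prob (step E) {E'. E' \<inter> far_inliers E \<noteq> {}}"
    unfolding alg3_step_eq_map_pmf by simp
  finally show ?thesis .
qed

text \<open>Sets with \<open>phi eps X d z E \<le> 2 rad\<close> count as full progress, so that reaching one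
  also counts as progress.\<close>

definition progress :: "'a set \<Rightarrow> nat" where
  "progress E = (if phi eps X d z E \<le> 2 * rad then k else card (covered E))"

lemma progress_le: "progress E \<le> k"
  unfolding progress_def using card_covered_le by simp

lemma progress_less:
  assumes "E \<subseteq> X" "finite E" "2 * rad < phi eps X d z E"
  shows "progress E < k"
proof -
  have "covered E \<subset> Cs"
    using phi_le_if_all_covered[OF assms(2,1) less_imp_le[OF eps_pos]] assms(3)
    unfolding covered_def by fastforce
  then have "card (covered E) < card Cs"
    by (rule psubset_card_mono[OF finite_centres])
  then show ?thesis
    using assms(3) card_centres unfolding progress_def by simp
qed

lemma phi_antimono_step:
  assumes "E' \<in> set_pmf (step E)" "E \<subseteq> X" "finite E" "E \<noteq> {}"
  shows "phi eps X d z E' \<le> phi eps X d z E"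
  using phi_antimono[OF finite_X less_imp_le[OF eps_pos] set_pmf_stepD(3,1)[OF assms(1-3)] assms(4)] .

lemma progress_mono_step:
  assumes "E' \<in> set_pmf (step E)" "E \<subseteq> X" "finite E" "E \<noteq> {}"
  shows "progress E \<le> progress E'"
proof (cases "phi eps X d z E' \<le> 2 * rad")
  case False
  then have "\<not> phi eps X d z E \<le> 2 * rad"
    using phi_antimono_step[OF assms] by linarith
  moreover have "card (covered E) \<le> card (covered E')"
    using set_pmf_stepD[OF assms(1-3)] finite_centres
    by (intro card_mono) (auto simp: covered_def)
  ultimately show ?thesis
    using False unfolding progress_def by simp
qed (simp add: progress_def card_covered_le)

lemma progress_increases_step:
  assumes "E' \<in> set_pmf (step E)" "E \<subseteq> X" "finite E"
    and "2 * rad < phi eps X d z E" "E' \<inter> far_inliers E \<noteq> {}"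
  shows "progress E < progress E'"
proof (cases "phi eps X d z E' \<le> 2 * rad")
  case True
  then show ?thesis
    using progress_less[OF assms(2-4)] unfolding progress_def by simp
next
  case False
  then show ?thesis
    using card_covered_less[OF set_pmf_stepD[OF assms(1-3)]] assms(4,5) unfolding progress_def by auto
qed

section \<open>The potential argument\<close>

text \<open>\<open>decay = 1 - (1 - eta) (1 - eta/2)\<close>: in a bad round the potential is multiplied by at most
  \<open>eta\<close> with probability at least \<open>1 - eta/2\<close>, and by at most \<open>1\<close> otherwise.\<close>

abbreviation decay :: real where
  "decay \<equiv> eta / 2 + (1 - eta / 2) * eta"

definition potential :: "'a set \<Rightarrow> nat \<Rightarrow> real" where
  "potential E m =
     (if phi eps X d z E \<le> 2 * rad then 0 else (1 / eta) ^ (k - progress E) * decay ^ m)"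

lemma inverse_eta_power_mono: "a \<le> b \<Longrightarrow> (1 / eta) ^ a \<le> (1 / eta) ^ b"
  using eta_pos eta_less by (intro power_increasing) auto

lemma decay_nonneg: "0 \<le> decay"
  using eta_pos eta_less by simp

lemma potential_le: "potential E m \<le> (1 / eta) ^ (k - progress E) * decay ^ m"
  unfolding potential_def using decay_nonneg eta_pos by auto

lemma potential_after_step_le:
  assumes "E' \<in> set_pmf (step E)" "E \<subseteq> X" "finite E" "E \<noteq> {}" "2 * rad < phi eps X d z E"
  shows "potential E' m \<le> (1 / eta) ^ (k - progress E) * decay ^ m
           * (1 - (1 - eta) * indicator {E'. E' \<inter> far_inliers E \<noteq> {}} E')"
proof (cases "E' \<inter> far_inliers E \<noteq> {}")
  case True
  have "progress E < progress E'"
    using progress_increases_step[OF assms(1-3,5) True] .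
  then have "k - progress E' \<le> k - progress E - 1" "k - progress E = Suc (k - progress E - 1)"
    using progress_le[of E'] by auto
  then have "(1 / eta) ^ (k - progress E') \<le> eta * (1 / eta) ^ (k - progress E)"
    using inverse_eta_power_mono eta_pos by (simp add: power_Suc)
  then have "(1 / eta) ^ (k - progress E') * decay ^ m \<le> eta * (1 / eta) ^ (k - progress E) * decay ^ m"
    by (rule mult_right_mono) (rule zero_le_power[OF decay_nonneg])
  then show ?thesis
    using potential_le[of E' m] True by (simp add: ac_simps)
next
  case False
  have "(1 / eta) ^ (k - progress E') \<le> (1 / eta) ^ (k - progress E)"
    using inverse_eta_power_mono progress_mono_step[OF assms(1-4)] by simp
  then have "(1 / eta) ^ (k - progress E') * decay ^ m \<le> (1 / eta) ^ (k - progress E) * decay ^ m"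
    by (rule mult_right_mono) (rule zero_le_power[OF decay_nonneg])
  then show ?thesis
    using potential_le[of E' m] False by simp
qed

lemma expectation_potential_step:
  assumes "E \<subseteq> X" "finite E" "E \<noteq> {}"
  shows "measure_pmf.expectation (step E) (\<lambda>E'. potential E' m) \<le> potential E (Suc m)"
proof (cases "phi eps X d z E \<le> 2 * rad")
  case True
  then have "AE E' in step E. potential E' m = 0"
    using phi_antimono_step[OF _ assms] by (fastforce simp: AE_measure_pmf_iff potential_def)
  then show ?thesis
    using True by (simp add: integral_eq_zero_AE potential_def)
next
  case False
  let ?G = "{E'. E' \<inter> far_inliers E \<noteq> {}}"
  let ?c = "(1 / eta) ^ (k - progress E) * decay ^ m"
  have "measure_pmf.expectation (step E) (\<lambda>E'. potential E' m)
      \<le> measure_pmf.expectation (step E) (\<lambda>E'. ?c * (1 - (1 - eta) * indicator ?G E'))"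
    using potential_after_step_le[OF _ assms] False
    by (intro integral_mono_AE integrable_measure_pmf_finite finite_set_pmf_step)
       (auto simp: AE_measure_pmf_iff)
  also have "\<dots> = ?c * (1 - (1 - eta) * measure_pmf.prob (step E) ?G)"
    by (simp add: integrable_measure_pmf_finite[OF finite_set_pmf_step])
  also have "\<dots> \<le> ?c * (1 - (1 - eta) * (1 - eta / 2))"
    using prob_step_selects_far_inlier[of E] False eta_pos eta_less decay_nonneg
    by (intro mult_left_mono) (auto intro!: mult_left_mono)
  also have "1 - (1 - eta) * (1 - eta / 2) = decay"
    by (simp add: field_simps)
  also have "?c * decay = potential E (Suc m)"
    using False unfolding potential_def by (simp add: ac_simps)
  finally show ?thesis .
qed

lemma prob_iter_fails_le:
  assumes "E \<subseteq> X" "finite E" "E \<noteq> {}"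
  shows "measure_pmf.prob (iter_pmf m step E) {E'. \<not> phi eps X d z E' \<le> 2 * rad} \<le> potential E m"
  using assms
proof (induction m arbitrary: E)
  case 0
  have "1 \<le> (1 / eta) ^ (k - progress E)"
    using eta_pos eta_less by (intro one_le_power) auto
  then show ?case
    by (simp add: potential_def)
next
  case (Suc m)
  have "measure_pmf.prob (iter_pmf (Suc m) step E) {E'. \<not> phi eps X d z E' \<le> 2 * rad}
      = measure_pmf.expectation (step E)
          (\<lambda>E'. measure_pmf.prob (iter_pmf m step E') {E'. \<not> phi eps X d z E' \<le> 2 * rad})"
    by (simp add: measure_bind_pmf_eq_expectation)
  also have "\<dots> \<le> measure_pmf.expectation (step E) (\<lambda>E'. potential E' m)"
  proof (intro integral_mono_AE integrable_measure_pmf_finite finite_set_pmf_step)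
    have "E' \<noteq> {}" if "E' \<in> set_pmf (step E)" for E'
      using set_pmf_stepD(1)[OF that Suc.prems(1,2)] Suc.prems(3) by blast
    then show "AE E' in step E. measure_pmf.prob (iter_pmf m step E') {E'. \<not> phi eps X d z E' \<le> 2 * rad}
        \<le> potential E' m"
      using Suc.IH set_pmf_stepD(2,3)[OF _ Suc.prems(1,2)] by (simp add: AE_measure_pmf_iff)
  qed
  also have "\<dots> \<le> potential E (Suc m)"
    by (rule expectation_potential_step[OF Suc.prems])
  finally show ?case .
qed

lemma initial_sample_size_pos: "0 < alg3_ninit X z eta"
proof -
  have "0 < 1 / (1 - \<gamma>) * ln (1 / eta)"
    using gamma_less_one eta_pos eta_less by simp
  then show ?thesis
    unfolding alg3_ninit_def by simp
qed

lemma prob_alg3_fails_le: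
  "measure_pmf.prob (alg3 X d k z eps eta t) {E. \<not> phi eps X d z E \<le> 2 * rad}
     \<le> (1 / eta) ^ k * decay ^ (t - 1)"
proof -
  let ?M = "sample_list (alg3_ninit X z eta) X"
  have "measure_pmf.prob (iter_pmf (t - 1) step (set E0)) {E. \<not> phi eps X d z E \<le> 2 * rad}
      \<le> (1 / eta) ^ k * decay ^ (t - 1)" if "E0 \<in> set_pmf ?M" for E0
  proof -
    have "set E0 \<subseteq> X" "set E0 \<noteq> {}"
      using set_pmf_sample_listD[OF finite_X X_nonempty that] initial_sample_size_pos by auto
    then have "measure_pmf.prob (iter_pmf (t - 1) step (set E0)) {E. \<not> phi eps X d z E \<le> 2 * rad}
        \<le> (1 / eta) ^ (k - progress (set E0)) * decay ^ (t - 1)"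
      using prob_iter_fails_le[of "set E0" "t - 1"] potential_le[of "set E0" "t - 1"]
      by (meson order_trans finite_set)
    also have "\<dots> \<le> (1 / eta) ^ k * decay ^ (t - 1)"
      by (intro mult_right_mono inverse_eta_power_mono) (auto simp: decay_nonneg)
    finally show ?thesis .
  qed
  then have "measure_pmf.expectation ?M
      (\<lambda>E0. measure_pmf.prob (iter_pmf (t - 1) step (set E0)) {E. \<not> phi eps X d z E \<le> 2 * rad})
      \<le> measure_pmf.expectation ?M (\<lambda>_. (1 / eta) ^ k * decay ^ (t - 1))"
    by (intro integral_mono_AE integrable_measure_pmf_finite finite_set_pmf_sample_list
        finite_X X_nonempty) (auto simp: AE_measure_pmf_iff)
  then show ?thesis
    unfolding alg3_def by (simp add: measure_bind_pmf_eq_expectation)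
qed

end

section \<open>Number of rounds\<close>

lemma alg3_iterations_ge:
  fixes eta :: real and k :: nat
  assumes "0 < eta" "eta < 1/2" "0 < k"
  shows "(2 * real k + 2) / (1 - eta)
           \<le> real (nat \<lceil>(2 + 2 / (real k * (1 - eta)) * ln (1 / eta)) * real k / (1 - eta)\<rceil>)"
proof -
  have "1 - eta \<le> ln (1 / eta)"
    using ln_le_minus_one[of eta] assms by (simp add: ln_div)
  then have "2 \<le> 2 * ln (1 / eta) / (1 - eta)"
    using assms by (simp add: field_simps)
  also have "2 * ln (1 / eta) / (1 - eta)
      = (2 + 2 / (real k * (1 - eta)) * ln (1 / eta)) * real k - 2 * real k"
    using assms by (simp add: field_simps)
  finally have "(2 * real k + 2) / (1 - eta)
      \<le> (2 + 2 / (real k * (1 - eta)) * ln (1 / eta)) * real k / (1 - eta)"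
    using assms by (intro divide_right_mono) auto
  then show ?thesis
    using real_nat_ceiling_ge order_trans by blast
qed

lemma power_inverse_times_power_le:
  fixes eta a :: real
  assumes "0 < eta" "0 \<le> a" "eta * a \<le> 1" "j + k \<le> T"
  shows "(1 / eta) ^ k * (eta * a) ^ T \<le> eta ^ j * a ^ (j + k)"
proof -
  have "(eta * a) ^ T \<le> (eta * a) ^ (j + k)"
    using assms by (intro power_decreasing) auto
  then have "(1 / eta) ^ k * (eta * a) ^ T \<le> (1 / eta) ^ k * (eta * a) ^ (j + k)"
    using assms(1) by (intro mult_left_mono) auto
  also have "\<dots> = ((1 / eta) ^ k * eta ^ k) * eta ^ j * a ^ (j + k)"
    by (simp add: power_mult_distrib power_add ac_simps)
  also have "(1 / eta) ^ k * eta ^ k = 1"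
    using assms(1) by (simp add: power_mult_distrib[symmetric])
  finally show ?thesis
    by simp
qed

lemma decay_power_le_small_eta:
  fixes eta :: real
  assumes "0 < eta" "eta \<le> 1/3" "2 * k + 1 \<le> T"
  shows "(1 / eta) ^ k * (eta * ((3 - eta) / 2)) ^ T \<le> 2 * eta"
proof -
  define a where "a = (3 - eta) / 2"
  have a: "1 \<le> a" "a \<le> 3/2"
    using assms(1,2) unfolding a_def by auto
  have "eta * a \<le> 1"
    using mult_mono[of eta "1/3" a "3/2"] assms(1,2) a by simp
  have "(1 / eta) ^ k * (eta * a) ^ T \<le> eta ^ (k + 1) * a ^ ((k + 1) + k)"
    using a assms(3) \<open>eta * a \<le> 1\<close> by (intro power_inverse_times_power_le assms(1)) auto
  also have "\<dots> = eta * a * (eta * a\<^sup>2) ^ k"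
    by (simp add: power_mult_distrib power_add power_mult[symmetric] mult_2_right ac_simps)
  also have "\<dots> \<le> eta * a * 1"
  proof (intro mult_left_mono power_le_one)
    show "eta * a\<^sup>2 \<le> 1"
      using mult_mono[of eta "1/3" "a\<^sup>2" "(3/2)\<^sup>2"] power_mono[of a "3/2" 2] assms(1,2) a
      by (simp add: power2_eq_square)
  qed (use assms(1) a in auto)
  also have "\<dots> \<le> 2 * eta"
    using a assms(1) by simp
  finally show ?thesis
    unfolding a_def .
qed

lemma decay_power_le_large_eta:
  fixes eta :: real
  assumes "1/3 < eta" "eta < 1/2" "3 * k + 2 \<le> T"
  shows "(1 / eta) ^ k * (eta * ((3 - eta) / 2)) ^ T \<le> 2 * eta"
proof -
  define a where "a = (3 - eta) / 2"
  have a: "1 \<le> a" "a \<le> 3/2"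
    using assms(1,2) unfolding a_def by auto
  have "eta * a \<le> 1"
    using mult_mono[of eta "1/2" a "3/2"] assms(1,2) a by simp
  have "(1 / eta) ^ k * (eta * a) ^ T \<le> eta ^ (2 * k + 2) * a ^ ((2 * k + 2) + k)"
    using a assms \<open>eta * a \<le> 1\<close> by (intro power_inverse_times_power_le) auto
  also have "\<dots> = (eta * (eta * a\<^sup>2)) * (eta\<^sup>2 * a ^ 3) ^ k"
    by (simp add: power_mult_distrib power_add power_mult[symmetric] mult_2_right
        numeral_3_eq_3 power2_eq_square ac_simps)
  also have "\<dots> \<le> (eta * (eta * a\<^sup>2)) * 1"
  proof (intro mult_left_mono power_le_one)
    have "eta\<^sup>2 * a ^ 3 \<le> (1/2)\<^sup>2 * (3/2) ^ 3"
      using assms(1,2) a by (intro mult_mono power_mono) auto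
    then show "eta\<^sup>2 * a ^ 3 \<le> 1"
      by (simp add: power_numeral_reduce)
  qed (use assms(1) a in auto)
  also have "\<dots> \<le> 2 * eta"
    using mult_mono[of eta "1/2" "a\<^sup>2" "(3/2)\<^sup>2"] power_mono[of a "3/2" 2] assms(1,2) a
    by (simp add: power2_eq_square)
  finally show ?thesis
    unfolding a_def .
qed

lemma alg3_iterations_suffice:
  fixes eta :: real and k t :: nat
  assumes "0 < eta" "eta < 1/2" "0 < k"
    and "t = nat \<lceil>(2 + 2 / (real k * (1 - eta)) * ln (1 / eta)) * real k / (1 - eta)\<rceil>"
  shows "(1 / eta) ^ k * (eta / 2 + (1 - eta / 2) * eta) ^ (t - 1) \<le> 2 * eta"
proof -
  have decay: "eta / 2 + (1 - eta / 2) * eta = eta * ((3 - eta) / 2)"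
    by (simp add: field_simps)
  have t: "(2 * real k + 2) / (1 - eta) \<le> real t"
    using alg3_iterations_ge[OF assms(1-3)] assms(4) by simp
  show ?thesis
  proof (cases "eta \<le> 1/3")
    case True
    have "2 * real k + 2 \<le> (2 * real k + 2) / (1 - eta)"
      using assms(1,2) by (simp add: field_simps)
    then have "2 * k + 1 \<le> t - 1"
      using t by linarith
    then show ?thesis
      unfolding decay using decay_power_le_small_eta[OF assms(1) True] by blast
  next
    case False
    have "(real k + 1) * 1 \<le> (real k + 1) * (3 * eta)"
      using False by (intro mult_left_mono) auto
    then have "3 * real k + 3 \<le> (2 * real k + 2) / (1 - eta)"
      using assms(2) by (simp add: field_simps)
    then have "3 * k + 2 \<le> t - 1"
      using t by linarith
    moreover have "1/3 < eta"
      using False by simp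
    ultimately show ?thesis
      unfolding decay using decay_power_le_large_eta[OF _ assms(2)] by blast
  qed
qed

theorem theorem10:
  fixes X :: "'a set" and d :: "'a \<Rightarrow> 'a \<Rightarrow> real" and k z :: nat and eps eta :: real
  assumes "finite X" and "metric_on X d"
    and "0 < k" and "0 < z" and "z < card X"
    and "0 < eps" and "0 < eta" and "eta < 1/2"
  defines "c \<equiv> 2 + 2 / (real k * (1 - eta)) * ln (1 / eta)"
  defines "t \<equiv> nat \<lceil>c * real k / (1 - eta)\<rceil>"
  shows "measure_pmf.prob (alg3 X d k z eps eta t)
           {E. phi eps X d z E \<le> 2 * r_opt X d k z} \<ge> 1 - 2 * eta"
proof -
  have "X \<noteq> {}"
    using assms(5) by auto
  then obtain Xs Cs where opt: "Xs \<subseteq> X" "card X - z \<le> card Xs" "Cs \<subseteq> X" "Cs \<noteq> {}"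
    "card Cs \<le> k" "r_opt X d k z = radius d Xs Cs"
    using r_opt_attained[OF assms(1) _ assms(3)] by metis
  interpret alg3_run X d k z Xs Cs eps eta
    by unfold_locales (use assms opt in auto)
  let ?good = "{E. phi eps X d z E \<le> 2 * r_opt X d k z}"
  have "measure_pmf.prob (alg3 X d k z eps eta t) (- ?good) \<le> (1 / eta) ^ k * decay ^ (t - 1)"
    using prob_alg3_fails_le[of t] opt(6) by (simp add: Compl_eq)
  also have "\<dots> \<le> 2 * eta"
    by (rule alg3_iterations_suffice[OF assms(7,8,3)]) (simp add: t_def c_def)
  finally show ?thesis
    using measure_pmf.prob_compl[of ?good "alg3 X d k z eps eta t"] by (simp add: Compl_eq_Diff_UNIV)
qed

end
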